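(* Let $d$ be an integer and let $b,\alpha,\beta\in\mathbb{Z}_{\ge0}^n$ satisfy $\alpha_1\le\cdots\le\alpha_n=d$, $\beta_1\le\cdots\le\beta_n=d$, $\alpha_i\le\beta_i$ for all $i$, $\alpha_1=0$ and $\beta_1=b_1$. Let $I\subseteq S=K[x_1,\ldots,x_n]$ be the ideal generated by all monomials $x^u$ with $u\in\mathbb{Z}_{\ge0}^n$, $0\le u_i\le b_i$ and $\alpha_i\le u_1+\cdots+u_i\le\beta_i$ for $i=1,\ldots,n$ (the basic PLP-polymatroidal ideal of type $(\mathbf{0},b\mid\alpha,\beta)$). Then $\mathrm{soc}(I)$ is the basic PLP-polymatroidal ideal of type $$(\mathbf{0},(b_1-1,\ldots,b_n-1)\mid(\alpha_1,\ldots,\alpha_{n-1},\alpha_n-1),(\beta_1-1,\ldots,\beta_n-1)),$$ that is, $\mathrm{soc}(I)$ is the ideal generated by all monomials $x^v$ with $v\in\mathbb{Z}_{\ge0}^n$ satisfying $0\le v_i\le b_i-1$ for $i=1,\ldots,n$, $\alpha_i\le v_1+\cdots+v_i\le\beta_i-1$ for $i=1,\ldots,n-1$, and $v_1+\cdots+v_n=d-1$.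
   Context: $K$ is a field and $\mathfrak{m}=(x_1,\ldots,x_n)$. $I$ is a polymatroidal ideal generated in degree $d$ and has a linear resolution; $\mathrm{soc}(I)$ denotes the ideal generated by all monomials $w$ of degree $d-1$ with $x_iw\in I$ for all $i$, so that $(I:\mathfrak{m})=I+\mathrm{soc}(I)$. The PLP-polymatroidal ideal of type $(\mathbf{0},b'\mid\alpha',\beta')$ is the ideal generated by the monomials $x^v$ with $0\le v_i\le b'_i$ and $\alpha'_i\le v_1+\cdots+v_i\le\beta'_i$ for all $i$. *)

theory Defs
  imports Main
begin

text \<open>Monomials of S = K[x_1,...,x_n] are identified with exponent vectors
  u :: nat \<Rightarrow> nat supported on {1..n}.  A monomial ideal is identified with
  the set of monomials it contains (which determines it, over any field K).\<close>

definition monomials_in :: "nat \<Rightarrow> (nat \<Rightarrow> nat) set" where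
  "monomials_in n = {u. \<forall>i. i \<notin> {1..n} \<longrightarrow> u i = 0}"

definition mono_ideal :: "nat \<Rightarrow> (nat \<Rightarrow> nat) set \<Rightarrow> (nat \<Rightarrow> nat) set" where
  "mono_ideal n G = {u \<in> monomials_in n. \<exists>g\<in>G. \<forall>i. g i \<le> u i}"

definition mdeg :: "nat \<Rightarrow> (nat \<Rightarrow> nat) \<Rightarrow> int" where
  "mdeg n u = (\<Sum>i=1..n. int (u i))"

definition mulx :: "nat \<Rightarrow> (nat \<Rightarrow> nat) \<Rightarrow> (nat \<Rightarrow> nat)" where
  "mulx i w = w(i := w i + 1)"

text \<open>Generators of soc(I): monomials w of degree d-1 with x_i w in I for all i.\<close>
definition soc_gens :: "nat \<Rightarrow> int \<Rightarrow> (nat \<Rightarrow> nat) set \<Rightarrow> (nat \<Rightarrow> nat) set" where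
  "soc_gens n d I = {w \<in> monomials_in n. mdeg n w = d - 1 \<and> (\<forall>i\<in>{1..n}. mulx i w \<in> I)}"

definition soc :: "nat \<Rightarrow> int \<Rightarrow> (nat \<Rightarrow> nat) set \<Rightarrow> (nat \<Rightarrow> nat) set" where
  "soc n d I = mono_ideal n (soc_gens n d I)"

definition plp_gens :: "nat \<Rightarrow> (nat \<Rightarrow> int) \<Rightarrow> (nat \<Rightarrow> int) \<Rightarrow> (nat \<Rightarrow> int) \<Rightarrow> (nat \<Rightarrow> nat) set" where
  "plp_gens n b \<alpha> \<beta> = {u \<in> monomials_in n. \<forall>i\<in>{1..n}.
      int (u i) \<le> b i \<and> \<alpha> i \<le> (\<Sum>j=1..i. int (u j)) \<and> (\<Sum>j=1..i. int (u j)) \<le> \<beta> i}"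

end

theory Submission
  imports Defs
begin

text \<open>Since \<open>\<alpha> n = \<beta> n = d\<close>, the ideal \<open>I\<close> is generated in degree \<open>d\<close>, so its monomials of
  degree \<open>d\<close> are exactly its generators, and a monomial \<open>w\<close> of degree \<open>d - 1\<close> lies in \<open>soc(I)\<close>
  iff every \<open>x\<^sub>i w\<close> is a generator. Multiplying by \<open>x\<^sub>i\<close> raises the partial sum
  \<open>w\<^sub>1 + \<dots> + w\<^sub>k\<close> by one exactly when \<open>i \<le> k\<close>; hence the binding choices are \<open>i = n\<close> for the
  lower bounds \<open>\<alpha>\<close>, and \<open>i = k\<close> for the upper bounds \<open>\<beta>\<close> and for \<open>w\<^sub>k + 1 \<le> b\<^sub>k\<close>.\<close>

lemma mulx_in_monomials_in:
  "i \<in> {1..n} \<Longrightarrow> w \<in> monomials_in n \<Longrightarrow> mulx i w \<in> monomials_in n"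
  by (auto simp: monomials_in_def mulx_def)

lemma sum_mulx:
  "(\<Sum>j=1..k. int (mulx i w j)) = (\<Sum>j=1..k. int (w j)) + (if i \<in> {1..k} then 1 else 0)"
proof -
  have "(\<Sum>j=1..k. int (mulx i w j)) = (\<Sum>j=1..k. int (w j) + (if j = i then 1 else 0))"
    by (rule sum.cong) (auto simp: mulx_def)
  also have "\<dots> = (\<Sum>j=1..k. int (w j)) + (if i \<in> {1..k} then 1 else 0)"
    by (simp add: sum.distrib)
  finally show ?thesis .
qed

lemma mdeg_mulx: "i \<in> {1..n} \<Longrightarrow> mdeg n (mulx i w) = mdeg n w + 1"
  unfolding mdeg_def sum_mulx by simp

lemma mdeg_plp_gens:
  assumes "n \<ge> 1" "\<alpha> n = d" "\<beta> n = d" "u \<in> plp_gens n b \<alpha> \<beta>"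
  shows "mdeg n u = d"
proof -
  have "n \<in> {1..n}" using assms(1) by simp
  with assms(4) have "\<alpha> n \<le> mdeg n u" "mdeg n u \<le> \<beta> n"
    by (auto simp: plp_gens_def mdeg_def)
  with assms(2,3) show ?thesis by simp
qed

lemma mono_ideal_equigenerated_mdeg_eq:
  assumes G: "G \<subseteq> monomials_in n" "\<forall>g\<in>G. mdeg n g = d"
    and u: "u \<in> mono_ideal n G" "mdeg n u = d"
  shows "u \<in> G"
proof -
  from u(1) obtain g where g: "g \<in> G" and le: "\<forall>i. g i \<le> u i" and um: "u \<in> monomials_in n"
    by (auto simp: mono_ideal_def)
  have "(\<Sum>j=1..n. int (u j) - int (g j)) = 0"
    using G(2) g u(2) by (simp add: mdeg_def sum_subtractf)
  moreover have "\<forall>j\<in>{1..n}. 0 \<le> int (u j) - int (g j)"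
    using le by simp
  ultimately have "\<forall>j\<in>{1..n}. u j = g j"
    using sum_nonneg_eq_0_iff[of "{1..n}" "\<lambda>j. int (u j) - int (g j)"] by simp
  moreover have "\<forall>j. j \<notin> {1..n} \<longrightarrow> u j = 0 \<and> g j = 0"
    using G(1) g um by (auto simp: monomials_in_def)
  ultimately have "u = g"
    by (metis ext)
  with g show ?thesis by simp
qed

lemma soc_gens_mono_ideal_equigenerated:
  assumes "G \<subseteq> monomials_in n" "\<forall>g\<in>G. mdeg n g = d"
  shows "soc_gens n d (mono_ideal n G) =
    {w \<in> monomials_in n. mdeg n w = d - 1 \<and> (\<forall>i\<in>{1..n}. mulx i w \<in> G)}"
  unfolding soc_gens_def
proof (intro Collect_cong conj_cong refl ball_cong)
  fix w i
  assume w: "w \<in> monomials_in n" "mdeg n w = d - 1" and i: "i \<in> {1..n}"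
  have "mulx i w \<in> monomials_in n" "mdeg n (mulx i w) = d"
    using w i by (simp_all add: mulx_in_monomials_in mdeg_mulx)
  then show "mulx i w \<in> mono_ideal n G \<longleftrightarrow> mulx i w \<in> G"
    using assms mono_ideal_equigenerated_mdeg_eq[of G n d "mulx i w"]
    by (auto simp: mono_ideal_def)
qed

lemma all_mulx_in_plp_gens_iff:
  assumes "n \<ge> 1" "\<alpha> n \<le> d" "d \<le> \<beta> n"
    and w: "w \<in> monomials_in n" "(\<Sum>j=1..n. int (w j)) = d - 1"
  shows "(\<forall>i\<in>{1..n}. mulx i w \<in> plp_gens n b \<alpha> \<beta>) \<longleftrightarrow>
    (\<forall>i\<in>{1..n}. int (w i) \<le> b i - 1) \<and>
    (\<forall>i\<in>{1..<n}. \<alpha> i \<le> (\<Sum>j=1..i. int (w j)) \<and> (\<Sum>j=1..i. int (w j)) \<le> \<beta> i - 1)"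
    (is "?mulx \<longleftrightarrow> ?bounds \<and> ?partial")
proof
  assume gens: ?mulx
  have "int (mulx k w k) \<le> b k" if "k \<in> {1..n}" for k
    using gens that by (auto simp: plp_gens_def)
  then have ?bounds
    by (fastforce simp: mulx_def)
  moreover have ?partial
  proof
    fix k assume k: "k \<in> {1..<n}"
    then have "\<alpha> k \<le> (\<Sum>j=1..k. int (mulx n w j))" "(\<Sum>j=1..k. int (mulx k w j)) \<le> \<beta> k"
      using gens[rule_format, of n] gens[rule_format, of k] assms(1)
      by (auto simp: plp_gens_def)
    with k show "\<alpha> k \<le> (\<Sum>j=1..k. int (w j)) \<and> (\<Sum>j=1..k. int (w j)) \<le> \<beta> k - 1"
      unfolding sum_mulx by auto
  qed
  ultimately show "?bounds \<and> ?partial" ..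
next
  assume bounds: "?bounds \<and> ?partial"
  have "mulx i w \<in> plp_gens n b \<alpha> \<beta>" if i: "i \<in> {1..n}" for i
    unfolding plp_gens_def
  proof (intro CollectI conjI ballI mulx_in_monomials_in[OF i w(1)])
    fix k assume k: "k \<in> {1..n}"
    have "int (w k) < b k"
      using bounds k by auto
    then show "int (mulx i w k) \<le> b k"
      by (auto simp: mulx_def)
    have "\<alpha> k \<le> (\<Sum>j=1..k. int (mulx i w j)) \<and> (\<Sum>j=1..k. int (mulx i w j)) \<le> \<beta> k"
    proof (cases "k = n")
      case True
      with i w(2) have "(\<Sum>j=1..k. int (mulx i w j)) = d"
        unfolding sum_mulx by simp
      with True assms(2,3) show ?thesis by simp
    next
      case False
      with k bounds have "\<alpha> k \<le> (\<Sum>j=1..k. int (w j)) \<and> (\<Sum>j=1..k. int (w j)) \<le> \<beta> k - 1"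
        by auto
      then show ?thesis
        unfolding sum_mulx by auto
    qed
    then show "\<alpha> k \<le> (\<Sum>j=1..k. int (mulx i w j))" "(\<Sum>j=1..k. int (mulx i w j)) \<le> \<beta> k"
      by simp_all
  qed
  then show ?mulx ..
qed

lemma soc_gens_plp_ideal:
  assumes "n \<ge> 1" "\<alpha> n = d" "\<beta> n = d"
  shows "soc_gens n d (mono_ideal n (plp_gens n b \<alpha> \<beta>)) =
    {v \<in> monomials_in n.
      (\<forall>i\<in>{1..n}. int (v i) \<le> b i - 1) \<and>
      (\<forall>i\<in>{1..<n}. \<alpha> i \<le> (\<Sum>j=1..i. int (v j)) \<and> (\<Sum>j=1..i. int (v j)) \<le> \<beta> i - 1) \<and>
      (\<Sum>j=1..n. int (v j)) = d - 1}" (is "_ = ?V")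
proof -
  let ?G = "plp_gens n b \<alpha> \<beta>"
  have "?G \<subseteq> monomials_in n"
    unfolding plp_gens_def by blast
  moreover have "\<forall>g\<in>?G. mdeg n g = d"
    using mdeg_plp_gens[of n \<alpha> d \<beta> _ b] assms by blast
  ultimately have "soc_gens n d (mono_ideal n ?G) =
      {w \<in> monomials_in n. mdeg n w = d - 1 \<and> (\<forall>i\<in>{1..n}. mulx i w \<in> ?G)}"
    by (rule soc_gens_mono_ideal_equigenerated)
  also have "\<dots> = ?V"
    using all_mulx_in_plp_gens_iff[of n \<alpha> d \<beta> _ b] assms
    unfolding mdeg_def by (intro Collect_cong) auto
  finally show ?thesis .
qed

theorem proposition3p3:
  fixes n :: nat and d :: int and b \<alpha> \<beta> :: "nat \<Rightarrow> int"
  assumes "n \<ge> 1"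
    and "\<forall>i\<in>{1..n}. b i \<ge> 0 \<and> \<alpha> i \<ge> 0 \<and> \<beta> i \<ge> 0"
    and "\<forall>i\<in>{1..<n}. \<alpha> i \<le> \<alpha> (i + 1)" and "\<alpha> n = d"
    and "\<forall>i\<in>{1..<n}. \<beta> i \<le> \<beta> (i + 1)" and "\<beta> n = d"
    and "\<forall>i\<in>{1..n}. \<alpha> i \<le> \<beta> i"
    and "\<alpha> 1 = 0" and "\<beta> 1 = b 1"
  shows "soc n d (mono_ideal n (plp_gens n b \<alpha> \<beta>)) =
         mono_ideal n {v \<in> monomials_in n.
            (\<forall>i\<in>{1..n}. int (v i) \<le> b i - 1) \<and>
            (\<forall>i\<in>{1..<n}. \<alpha> i \<le> (\<Sum>j=1..i. int (v j)) \<and> (\<Sum>j=1..i. int (v j)) \<le> \<beta> i - 1) \<and>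
            (\<Sum>j=1..n. int (v j)) = d - 1}"
  unfolding soc_def soc_gens_plp_ideal[of n \<alpha> d \<beta> b, OF assms(1,4,6)] ..

end
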